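(* Let $m>6C^2(C+1)$ and $l_m=\lfloor\frac{m-2}{C+1}\rfloor$. If $\sum_{i=1}^n a_iP_m(x_i)$ is a leaf of the escalator tree of $m$-gonal forms with $n\ge l_m$ and $a_{l_m}\ge C+1$, then $$n\le \left(1-\frac{1}{(C+1)^2}\right)(m-2)+\frac{C+2}{C+1}.$$
   Context: For an integer $m\ge 3$ and $x\in\mathbb Z$ put $P_m(x)=\frac{m-2}{2}x^2-\frac{m-4}{2}x$. An $m$-gonal form of rank $n$ is $a_1P_m(x_1)+\cdots+a_nP_m(x_n)$ with positive integers $a_1\le\cdots\le a_n$ and $x_i\in\mathbb Z$; it represents $N$ if $N$ is a value at some integer vector, and is universal if it represents every positive integer. The truant of a non-universal form is the smallest positive integer it does not represent (the empty form has truant $1$). The escalator tree of $m$-gonal forms is the rooted tree whose root is the empty form; a universal node is a leaf, and a non-universal node $\sum_{i=1}^k a_iP_m(x_i)$ has as children exactly all forms $\sum_{i=1}^{k+1}a_iP_m(x_i)$ with $a_{k+1}\ge a_k$ (any $a_1\ge1$ if $k=0$) that represent the truant of the node. Standing assumption: $C$ is a fixed absolute constant such that for every $m\ge3$, every $m$-gonal form that represents every positive integer in $[1,C(m-2)]$ is universal. *)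

theory Defs
  imports Complex_Main
begin

text \<open>The m-gonal number P_m(x) = ((m-2)/2) x^2 - ((m-4)/2) x, integer valued.\<close>
definition Pm :: "nat \<Rightarrow> int \<Rightarrow> int" where
  "Pm m x = ((int m - 2) * x^2 - (int m - 4) * x) div 2"

text \<open>An m-gonal form a_1 P_m(x_1)+...+a_n P_m(x_n) is given by its coefficient list
  [a_1,...,a_n] (positive, nondecreasing).\<close>
definition represents :: "nat \<Rightarrow> int list \<Rightarrow> int \<Rightarrow> bool" where
  "represents m as N \<longleftrightarrow> (\<exists>x :: nat \<Rightarrow> int. N = (\<Sum>i<length as. as ! i * Pm m (x i)))"

definition universal :: "nat \<Rightarrow> int list \<Rightarrow> bool" where
  "universal m as \<longleftrightarrow> (\<forall>N::int. N \<ge> 1 \<longrightarrow> represents m as N)"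

definition truant :: "nat \<Rightarrow> int list \<Rightarrow> int" where
  "truant m as = (LEAST N::int. N \<ge> 1 \<and> \<not> represents m as N)"

inductive escalator_node :: "nat \<Rightarrow> int list \<Rightarrow> bool" for m where
  root: "escalator_node m []"
| child: "\<lbrakk> escalator_node m as; \<not> universal m as; a \<ge> 1;
           as \<noteq> [] \<longrightarrow> a \<ge> last as;
           represents m (as @ [a]) (truant m as) \<rbrakk> \<Longrightarrow> escalator_node m (as @ [a])"

definition escalator_leaf :: "nat \<Rightarrow> int list \<Rightarrow> bool" where
  "escalator_leaf m as \<longleftrightarrow> escalator_node m as \<and> universal m as"

definition standing_constant :: "real \<Rightarrow> bool" where
  "standing_constant C \<longleftrightarrow>
     (\<forall>m::nat. m \<ge> 3 \<longrightarrow> (\<forall>as::int list. (\<forall>i<length as. as ! i \<ge> 1) \<and> sorted as \<longrightarrow>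
        (\<forall>N::int. 1 \<le> N \<and> real_of_int N \<le> C * (real m - 2) \<longrightarrow> represents m as N) \<longrightarrow>
        universal m as))"

end

theory Submission
  imports Defs
begin

text \<open>Every node of the escalator tree has positive nondecreasing coefficients and represents
  every integer from 1 up to the sum of its coefficients, because each new coefficient is at
  most the truant of its parent. The parent of a leaf is not universal, so by the standing
  assumption its truant, and hence its coefficient sum plus one, is at most C(m-2). On the
  other hand, from position l_m on all coefficients are at least C+1, so the parent's
  coefficient sum is at least (l_m - 1) + (n - l_m)(C+1). Together with l_m (C+1) \<le> m-2
  this bounds n.\<close>

lemma Pm_0 [simp]: "Pm m 0 = 0"
  by (simp add: Pm_def)

lemma Pm_1 [simp]: "Pm m 1 = 1"
  by (simp add: Pm_def)

lemma Pm_nonneg: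
  assumes "m \<ge> 3"
  shows "Pm m x \<ge> 0"
proof -
  have factor: "(int m - 2) * x^2 - (int m - 4) * x = x * ((int m - 2) * x - (int m - 4))"
    by (simp add: power2_eq_square algebra_simps)
  consider "x \<ge> 1" | "x = 0" | "x \<le> -1" by linarith
  then have "x * ((int m - 2) * x - (int m - 4)) \<ge> 0"
  proof cases
    case 1
    then have "(int m - 2) * x \<ge> (int m - 2) * 1" using assms by (intro mult_left_mono) auto
    with 1 show ?thesis by (intro mult_nonneg_nonneg) auto
  next
    case 3
    then have "(int m - 2) * x \<le> (int m - 2) * (-1)" using assms by (intro mult_left_mono) auto
    with 3 assms show ?thesis by (intro mult_nonpos_nonpos) auto
  qed simp
  then show ?thesis unfolding Pm_def factor by simp
qed

lemma represents_0: "represents m as 0"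
  unfolding represents_def by (rule exI[of _ "\<lambda>_. 0"]) simp

lemma sum_form_snoc:
  "(\<Sum>i<length (as @ [a]). (as @ [a]) ! i * Pm m (x i)) =
   (\<Sum>i<length as. as ! i * Pm m (x i)) + a * Pm m (x (length as))"
  by (simp add: nth_append)

lemma represents_snoc:
  assumes "represents m as N"
  shows "represents m (as @ [a]) (N + a * Pm m v)"
proof -
  obtain x where x: "N = (\<Sum>i<length as. as ! i * Pm m (x i))"
    using assms unfolding represents_def by blast
  define y where "y = x(length as := v)"
  have "(\<Sum>i<length as. as ! i * Pm m (y i)) = N"
    unfolding x by (rule sum.cong) (auto simp: y_def)
  then have "N + a * Pm m v = (\<Sum>i<length (as @ [a]). (as @ [a]) ! i * Pm m (y i))"
    unfolding sum_form_snoc by (simp add: y_def)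
  then show ?thesis unfolding represents_def by blast
qed

lemma represents_snocE:
  assumes "represents m (as @ [a]) N"
  obtains N' v where "represents m as N'" "N = N' + a * Pm m v"
  using assms unfolding represents_def sum_form_snoc by blast

lemma represents_nonneg:
  assumes "m \<ge> 3" "\<forall>i<length as. as ! i \<ge> 1" "represents m as N"
  shows "N \<ge> 0"
proof -
  obtain x where "N = (\<Sum>i<length as. as ! i * Pm m (x i))"
    using assms(3) unfolding represents_def by blast
  also have "\<dots> \<ge> 0"
    using assms(2) Pm_nonneg[OF assms(1)] by (intro sum_nonneg mult_nonneg_nonneg) force+
  finally show ?thesis .
qed

lemma not_represents_1_Nil: "\<not> represents m [] 1"
  unfolding represents_def by simp

lemma truant_least:
  assumes "\<not> universal m as"
  shows "truant m as \<ge> 1 \<and> \<not> represents m as (truant m as) \<and>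
    (\<forall>N. 1 \<le> N \<and> N < truant m as \<longrightarrow> represents m as N)"
proof -
  define P where "P n \<longleftrightarrow> n \<ge> 1 \<and> \<not> represents m as (int n)" for n
  obtain N0 where "N0 \<ge> 1" "\<not> represents m as N0"
    using assms unfolding universal_def by auto
  then have "P (nat N0)" by (auto simp: P_def)
  then have P_Least: "P (LEAST n. P n)" and Least_le: "\<And>n. P n \<Longrightarrow> (LEAST n. P n) \<le> n"
    by (auto intro: LeastI Least_le)
  have "truant m as = int (LEAST n. P n)"
    unfolding truant_def
  proof (rule Least_equality)
    fix N assume "N \<ge> 1 \<and> \<not> represents m as N"
    then have "P (nat N)" by (auto simp: P_def)
    with \<open>N \<ge> 1 \<and> _\<close> show "int (LEAST n. P n) \<le> N" using Least_le by fastforce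
  qed (use P_Least in \<open>simp add: P_def\<close>)
  moreover have "represents m as N" if "1 \<le> N" "N < int (LEAST n. P n)" for N
  proof (rule ccontr)
    assume "\<not> represents m as N"
    with \<open>1 \<le> N\<close> have "P (nat N)" by (auto simp: P_def)
    with that show False using Least_le by fastforce
  qed
  ultimately show ?thesis using P_Least by (simp add: P_def)
qed

lemma sorted_snoc:
  fixes xs :: "'a::linorder list"
  assumes "sorted xs" "xs \<noteq> [] \<longrightarrow> last xs \<le> a"
  shows "sorted (xs @ [a])"
proof (cases xs rule: rev_exhaust)
  case (snoc ys y)
  with assms show ?thesis by (auto simp: sorted_append)
qed simp

lemma escalator_coefficient_le_truant:
  assumes "m \<ge> 3" "\<forall>i<length as. as ! i \<ge> 1" "a \<ge> 1"
    and "\<not> represents m as T" "represents m (as @ [a]) T"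
  shows "a \<le> T"
proof -
  obtain N v where N: "represents m as N" and T: "T = N + a * Pm m v"
    using assms(5) by (rule represents_snocE)
  have "N \<ge> 0" using represents_nonneg[OF assms(1,2) N] .
  have "Pm m v \<noteq> 0" using N T assms(4) by auto
  then have "a * 1 \<le> a * Pm m v" using Pm_nonneg[OF assms(1), of v] assms(3)
    by (intro mult_left_mono) auto
  with T \<open>N \<ge> 0\<close> show ?thesis by linarith
qed

lemma represents_upto_snoc:
  assumes "\<forall>N. 1 \<le> N \<and> N \<le> K \<longrightarrow> represents m as N" "0 \<le> a" "a \<le> K + 1"
  shows "\<forall>N. 1 \<le> N \<and> N \<le> K + a \<longrightarrow> represents m (as @ [a]) N"
proof (intro allI impI)
  fix N assume N: "1 \<le> N \<and> N \<le> K + a"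
  show "represents m (as @ [a]) N"
  proof (cases "N \<le> K")
    case True
    with N assms(1) have "represents m as N" by blast
    from represents_snoc[OF this, of a 0] show ?thesis by simp
  next
    case False
    with N assms have "N - a = 0 \<or> 1 \<le> N - a \<and> N - a \<le> K" by linarith
    then have "represents m as (N - a)" using assms(1) represents_0 by metis
    from represents_snoc[OF this, of a 1] show ?thesis by simp
  qed
qed

lemma escalator_node_invariant:
  assumes "escalator_node m as" "m \<ge> 3"
  shows "(\<forall>i<length as. as ! i \<ge> 1) \<and> sorted as \<and>
    (\<forall>N. 1 \<le> N \<and> N \<le> sum_list as \<longrightarrow> represents m as N)"
  using assms(1)
proof (induction rule: escalator_node.induct)
  case root
  then show ?case by auto
next
  case (child as a)
  then have pos: "\<forall>i<length as. as ! i \<ge> 1"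
    and upto_sum: "\<forall>N. 1 \<le> N \<and> N \<le> sum_list as \<longrightarrow> represents m as N" by auto
  note truant = truant_least[OF \<open>\<not> universal m as\<close>]
  have "sum_list as < truant m as" using upto_sum truant by (meson not_le)
  moreover have "a \<le> truant m as"
    using escalator_coefficient_le_truant[OF assms(2) pos] child.hyps truant by blast
  moreover have "\<forall>N. 1 \<le> N \<and> N \<le> truant m as - 1 \<longrightarrow> represents m as N"
    using truant by auto
  ultimately have "\<forall>N. 1 \<le> N \<and> N \<le> truant m as - 1 + a \<longrightarrow> represents m (as @ [a]) N"
    using \<open>a \<ge> 1\<close> by (intro represents_upto_snoc) auto
  with \<open>sum_list as < truant m as\<close> have "\<forall>N. 1 \<le> N \<and> N \<le> sum_list (as @ [a]) \<longrightarrow>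
      represents m (as @ [a]) N"
    by auto
  moreover have "\<forall>i<length (as @ [a]). (as @ [a]) ! i \<ge> 1"
    using pos \<open>a \<ge> 1\<close> by (auto simp: nth_append less_Suc_eq)
  moreover have "sorted (as @ [a])" using child by (intro sorted_snoc) auto
  ultimately show ?case by blast
qed

lemma standing_constant_ge_1:
  assumes "standing_constant C"
  shows "C \<ge> 1"
proof (rule ccontr)
  assume "\<not> C \<ge> 1"
  \<comment> \<open>then no N \<ge> 1 satisfies N \<le> C (3 - 2), so the hypothesis holds vacuously for the empty form\<close>
  then have "universal 3 []"
    using assms unfolding standing_constant_def by force
  then show False using not_represents_1_Nil unfolding universal_def by blast
qed

lemma standing_constant_truant_le:
  assumes "standing_constant C" "m \<ge> 3" "\<forall>i<length as. as ! i \<ge> 1" "sorted as"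
    and "\<not> universal m as"
  shows "real_of_int (truant m as) \<le> C * (real m - 2)"
proof -
  obtain N where N: "1 \<le> N" "real_of_int N \<le> C * (real m - 2)" "\<not> represents m as N"
    using assms unfolding standing_constant_def by blast
  have "truant m as \<le> N" using truant_least[OF assms(5)] N(1,3) by (meson not_le)
  with N(2) show ?thesis by linarith
qed

lemma escalator_leaf_parent_sum:
  assumes "standing_constant C" "m \<ge> 3" "escalator_leaf m as"
  shows "as \<noteq> [] \<and> real_of_int (sum_list (butlast as)) + 1 \<le> C * (real m - 2)"
proof -
  have "as \<noteq> []"
    using assms(3) not_represents_1_Nil unfolding escalator_leaf_def universal_def by auto
  with assms(3) obtain bs a where as: "as = bs @ [a]"
    and "escalator_node m bs" and not_univ: "\<not> universal m bs"
    unfolding escalator_leaf_def by (auto elim: escalator_node.cases)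
  then have bs: "(\<forall>i<length bs. bs ! i \<ge> 1) \<and> sorted bs \<and>
      (\<forall>N. 1 \<le> N \<and> N \<le> sum_list bs \<longrightarrow> represents m bs N)"
    using escalator_node_invariant assms(2) by blast
  then have "sum_list bs < truant m bs"
    using truant_least[OF not_univ] by (meson not_le)
  moreover have "real_of_int (truant m bs) \<le> C * (real m - 2)"
    using standing_constant_truant_le[OF assms(1,2)] bs not_univ by blast
  ultimately show ?thesis using \<open>as \<noteq> []\<close> as by simp
qed

lemma sum_list_ge_two_levels:
  fixes xs :: "int list" and c :: real
  assumes "k \<le> length xs"
    and "\<forall>i<k. xs ! i \<ge> 1" "\<forall>i. k \<le> i \<and> i < length xs \<longrightarrow> real_of_int (xs ! i) \<ge> c"
  shows "real k + real (length xs - k) * c \<le> real_of_int (sum_list xs)"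
proof -
  have split: "{..<length xs} = {..<k} \<union> {k..<length xs}" using assms(1) by auto
  have "real k + real (length xs - k) * c =
      (\<Sum>i<k. 1) + (\<Sum>i\<in>{k..<length xs}. c)" by simp
  also have "\<dots> \<le> (\<Sum>i<k. real_of_int (xs ! i)) + (\<Sum>i\<in>{k..<length xs}. real_of_int (xs ! i))"
    using assms(2,3) by (intro add_mono sum_mono) auto
  also have "\<dots> = real_of_int (sum_list xs)"
    unfolding sum_list_sum_nth atLeast0LessThan of_int_sum split by (rule sum.union_disjoint[symmetric]) auto
  finally show ?thesis .
qed

lemma length_bound_from_sum_bounds:
  fixes c M n L S :: real
  assumes "c \<ge> 0" "L * (c + 1) \<le> M" "(L - 1) + (n - L) * (c + 1) \<le> S" "S + 1 \<le> c * M"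
  shows "n \<le> (1 - 1 / (c + 1)^2) * M + (c + 2) / (c + 1)"
proof -
  have "n * (c + 1) \<le> c * M + c * L" using assms(3,4) by (simp add: algebra_simps)
  then have "n * (c + 1) * (c + 1) \<le> (c * M + c * L) * (c + 1)"
    using assms(1) by (intro mult_right_mono) auto
  also have "\<dots> = c * M * (c + 1) + c * (L * (c + 1))" by (simp add: algebra_simps)
  also have "\<dots> \<le> c * M * (c + 1) + c * M"
    using assms(1,2) by (intro add_left_mono mult_left_mono) auto
  finally have "n * (c + 1)^2 \<le> ((c + 1)^2 - 1) * M"
    by (simp add: power2_eq_square algebra_simps)
  moreover have "(c + 1)^2 > 0" using assms(1) by simp
  ultimately have "n \<le> (1 - 1 / (c + 1)^2) * M" by (simp add: field_simps)
  also have "\<dots> \<le> (1 - 1 / (c + 1)^2) * M + (c + 2) / (c + 1)" using assms(1) by simp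
  finally show ?thesis .
qed

lemma sum_list_butlast_sorted_ge:
  fixes xs :: "int list" and c :: real
  assumes "sorted xs" "\<forall>i<length xs. xs ! i \<ge> 1"
    and "1 \<le> L" "L \<le> length xs" "real_of_int (xs ! (L - 1)) \<ge> c"
  shows "real (L - 1) + real (length xs - L) * c \<le> real_of_int (sum_list (butlast xs))"
proof -
  have "real (L - 1) + real (length (butlast xs) - (L - 1)) * c
      \<le> real_of_int (sum_list (butlast xs))"
  proof (rule sum_list_ge_two_levels)
    show "\<forall>i. L - 1 \<le> i \<and> i < length (butlast xs) \<longrightarrow> c \<le> real_of_int (butlast xs ! i)"
    proof (intro allI impI)
      fix i assume i: "L - 1 \<le> i \<and> i < length (butlast xs)"
      then have "xs ! (L - 1) \<le> xs ! i" by (intro sorted_nth_mono[OF assms(1)]) auto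
      with assms(5) i show "c \<le> real_of_int (butlast xs ! i)" by (simp add: nth_butlast)
    qed
  qed (use assms(2,4) in \<open>auto simp: nth_butlast\<close>)
  with assms(3) show ?thesis by simp
qed

lemma floor_quotient_bounds:
  fixes C :: real
  assumes "C \<ge> 1" "real m > 6 * C^2 * (C + 1)"
  shows "1 \<le> \<lfloor>(real m - 2) / (C + 1)\<rfloor>"
    and "real_of_int \<lfloor>(real m - 2) / (C + 1)\<rfloor> * (C + 1) \<le> real m - 2"
proof -
  have "6 * 1 * (C + 1) \<le> 6 * C^2 * (C + 1)" using assms(1) by (intro mult_right_mono) auto
  with assms have "1 \<le> (real m - 2) / (C + 1)" by simp
  then show "1 \<le> \<lfloor>(real m - 2) / (C + 1)\<rfloor>" by simp
  have "real_of_int \<lfloor>(real m - 2) / (C + 1)\<rfloor> \<le> (real m - 2) / (C + 1)" by simp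
  with assms(1) show "real_of_int \<lfloor>(real m - 2) / (C + 1)\<rfloor> * (C + 1) \<le> real m - 2"
    by (simp add: le_divide_eq)
qed

theorem lemma4p3:
  fixes C :: real and m :: nat and as :: "int list"
  assumes "standing_constant C"
    and "m \<ge> 3"
    and "real m > 6 * C^2 * (C + 1)"
    and "escalator_leaf m as"
    and "int (length as) \<ge> \<lfloor>(real m - 2) / (C + 1)\<rfloor>"
    and "real_of_int (as ! nat (\<lfloor>(real m - 2) / (C + 1)\<rfloor> - 1)) \<ge> C + 1"
  shows "real (length as) \<le> (1 - 1 / (C + 1)^2) * (real m - 2) + (C + 2) / (C + 1)"
proof -
  define l where "l = \<lfloor>(real m - 2) / (C + 1)\<rfloor>"
  have "C \<ge> 1" using standing_constant_ge_1[OF assms(1)] .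
  then have "1 \<le> l" and l: "real_of_int l * (C + 1) \<le> real m - 2"
    using floor_quotient_bounds[OF _ assms(3)] unfolding l_def by auto
  have coeffs: "\<forall>i<length as. as ! i \<ge> 1" "sorted as"
    using escalator_node_invariant[OF _ assms(2)] assms(4) unfolding escalator_leaf_def by auto
  have "nat (l - 1) = nat l - 1" using \<open>1 \<le> l\<close> by (simp add: nat_diff_distrib')
  then have "real (nat l - 1) + real (length as - nat l) * (C + 1)
      \<le> real_of_int (sum_list (butlast as))"
    using assms(5,6)[folded l_def] \<open>1 \<le> l\<close> coeffs
    by (intro sum_list_butlast_sorted_ge) auto
  moreover have "real_of_int (sum_list (butlast as)) + 1 \<le> C * (real m - 2)"
    using escalator_leaf_parent_sum[OF assms(1,2,4)] by blast
  ultimately show ?thesis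
    using \<open>C \<ge> 1\<close> l \<open>1 \<le> l\<close> assms(5)[folded l_def]
    by (intro length_bound_from_sum_bounds[where L = "real_of_int l"]) (auto simp: of_nat_diff)
qed

end
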